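(* Let $M=\{D(c_i;r_i)\subset\mathbb R^d: r_i>0,\ 1\le i\le m\}$ be a finite set of closed balls in $\mathbb R^d$ such that $D(c_i;r_i)\cap D(c_j;r_j)\ne\emptyset$ for every pair $i,j$. Then $$\bigcap_{i=1}^m D\!\left(c_i;\sqrt{\tfrac{2d}{d+1}}\,r_i\right)\neq\emptyset.$$
   Context: $D(c;r)=\{x\in\mathbb R^d:\|x-c\|\le r\}$ denotes the closed Euclidean ball. The radii $r_i$ may differ from one another. *)

theory Defs
  imports "HOL-Analysis.Analysis"
begin

end

theory Submission
  imports Defs "HOL-Analysis.Analysis"
begin

text \<open>Let \<open>x\<^sub>0\<close> be a point minimising the largest ratio \<open>|x - c\<^sub>i| / r\<^sub>i\<close>, with optimal value \<open>l\<close>.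
  If the vectors \<open>x\<^sub>0 - c\<^sub>i\<close> of the balls where the maximum is attained could be separated from
  \<open>0\<close> by a hyperplane, moving \<open>x\<^sub>0\<close> across it would decrease every active ratio; hence \<open>0\<close> is a
  convex combination of them, and by Caratheodory at most \<open>k \<le> d + 1\<close> of them suffice. Expanding
  \<open>\<Sum>\<^sub>i\<^sub>j \<beta>\<^sub>i \<beta>\<^sub>j |c\<^sub>i - c\<^sub>j|\<^sup>2\<close> for the balancing weights and bounding \<open>|c\<^sub>i - c\<^sub>j| \<le> r\<^sub>i + r\<^sub>j\<close> off the diagonal
  then yields \<open>l\<^sup>2 \<le> 2 - 2/k \<le> 2d/(d+1)\<close>.\<close>

lemma sum_sum_weighted_norm_diff_sq:
  fixes u :: "'b \<Rightarrow> 'a::real_inner" and \<beta> :: "'b \<Rightarrow> real"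
  shows "(\<Sum>i\<in>J. \<Sum>j\<in>J. \<beta> i * \<beta> j * (norm (u i - u j))\<^sup>2)
       = 2 * sum \<beta> J * (\<Sum>j\<in>J. \<beta> j * (norm (u j))\<^sup>2) - 2 * (norm (\<Sum>j\<in>J. \<beta> j *\<^sub>R u j))\<^sup>2"
proof -
  have "(norm (\<Sum>j\<in>J. \<beta> j *\<^sub>R u j))\<^sup>2 = (\<Sum>i\<in>J. \<Sum>j\<in>J. \<beta> i * \<beta> j * (u i \<bullet> u j))"
    unfolding power2_norm_eq_inner inner_sum_left by (simp add: inner_sum_right sum_distrib_left mult.assoc mult.left_commute)
  moreover have "(\<Sum>i\<in>J. \<Sum>j\<in>J. \<beta> i * \<beta> j * (norm (u i - u j))\<^sup>2)
      = (\<Sum>i\<in>J. \<Sum>j\<in>J. \<beta> i * (norm (u i))\<^sup>2 * \<beta> j + \<beta> i * (\<beta> j * (norm (u j))\<^sup>2)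
                         - 2 * (\<beta> i * \<beta> j * (u i \<bullet> u j)))"
    by (intro sum.cong refl)
      (simp add: power2_norm_eq_inner inner_commute algebra_simps)
  moreover have "\<dots> = (\<Sum>i\<in>J. \<beta> i * (norm (u i))\<^sup>2) * sum \<beta> J + sum \<beta> J * (\<Sum>j\<in>J. \<beta> j * (norm (u j))\<^sup>2)
      - 2 * (\<Sum>i\<in>J. \<Sum>j\<in>J. \<beta> i * \<beta> j * (u i \<bullet> u j))"
    unfolding sum_product by (simp add: sum_subtractf sum.distrib sum_distrib_left)
  ultimately show ?thesis by simp
qed

lemma jung_card_bound:
  fixes c :: "'b \<Rightarrow> 'a::real_inner"
  assumes "finite J" and \<beta>_nonneg: "\<And>j. j \<in> J \<Longrightarrow> \<beta> j \<ge> 0"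
    and normalized: "(\<Sum>j\<in>J. \<beta> j * (r j)\<^sup>2) = 1"
    and balanced: "(\<Sum>j\<in>J. \<beta> j *\<^sub>R (c j - x)) = 0"
    and on_spheres: "\<And>j. j \<in> J \<Longrightarrow> dist (c j) x = l * r j"
    and pairwise: "\<And>i j. i \<in> J \<Longrightarrow> j \<in> J \<Longrightarrow> i \<noteq> j \<Longrightarrow> dist (c i) (c j) \<le> r i + r j"
  shows "real (card J) * l\<^sup>2 \<le> 2 * real (card J) - 2"
proof -
  define B where "B = sum \<beta> J"
  define P where "P = (\<Sum>j\<in>J. \<beta> j * r j)"
  define T where "T = (\<Sum>j\<in>J. (\<beta> j * r j)\<^sup>2)"
  define k where "k = real (card J)"
  have "J \<noteq> {}" using normalized by auto
  then have k_ge_1: "k \<ge> 1" using \<open>finite J\<close> unfolding k_def by (simp add: Suc_leI card_gt_0_iff)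
  have B_pos: "B > 0"
  proof -
    have "B \<noteq> 0"
    proof
      assume "B = 0"
      then have "\<forall>j\<in>J. \<beta> j = 0"
        using \<beta>_nonneg sum_nonneg_eq_0_iff[OF \<open>finite J\<close>] unfolding B_def by blast
      then show False using normalized by simp
    qed
    moreover have "B \<ge> 0" unfolding B_def using \<beta>_nonneg by (simp add: sum_nonneg)
    ultimately show ?thesis by simp
  qed
  have weighted_spread: "(\<Sum>i\<in>J. \<Sum>j\<in>J. \<beta> i * \<beta> j * (r i - r j)\<^sup>2) = 2 * B - 2 * P\<^sup>2"
    using sum_sum_weighted_norm_diff_sq[of \<beta> r J] normalized
    by (simp add: B_def P_def mult.commute)
  have spread_eq: "(\<Sum>i\<in>J. \<Sum>j\<in>J. \<beta> i * \<beta> j * (dist (c i) (c j))\<^sup>2) = 2 * l\<^sup>2 * B"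
  proof -
    have "(\<Sum>j\<in>J. \<beta> j * (norm (c j - x))\<^sup>2) = l\<^sup>2 * (\<Sum>j\<in>J. \<beta> j * (r j)\<^sup>2)"
      using on_spheres by (simp add: dist_norm sum_distrib_left algebra_simps)
    then show ?thesis
      using sum_sum_weighted_norm_diff_sq[of \<beta> "\<lambda>j. c j - x" J] balanced
      by (simp add: dist_norm B_def normalized)
  qed
  \<comment> \<open>Off the diagonal \<open>|c\<^sub>i - c\<^sub>j| \<le> r\<^sub>i + r\<^sub>j\<close>; on it both sides vanish.\<close>
  have "(\<Sum>i\<in>J. \<Sum>j\<in>J. \<beta> i * \<beta> j * (dist (c i) (c j))\<^sup>2)
      \<le> (\<Sum>i\<in>J. \<Sum>j\<in>J. \<beta> i * \<beta> j * ((r i + r j)\<^sup>2 - (if i = j then 4 * (r i)\<^sup>2 else 0)))"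
  proof (intro sum_mono)
    fix i j assume "i \<in> J" "j \<in> J"
    then have "(dist (c i) (c j))\<^sup>2 \<le> (r i + r j)\<^sup>2 - (if i = j then 4 * (r i)\<^sup>2 else 0)"
      using pairwise by (cases "i = j") (auto intro: power_mono)
    then show "\<beta> i * \<beta> j * (dist (c i) (c j))\<^sup>2
        \<le> \<beta> i * \<beta> j * ((r i + r j)\<^sup>2 - (if i = j then 4 * (r i)\<^sup>2 else 0))"
      using \<beta>_nonneg \<open>i \<in> J\<close> \<open>j \<in> J\<close> by (intro mult_left_mono) auto
  qed
  also have "\<dots> = 2 * B + 2 * P\<^sup>2 - 4 * T"
  proof -
    have "(\<Sum>i\<in>J. \<Sum>j\<in>J. \<beta> i * \<beta> j * ((r i + r j)\<^sup>2 - (if i = j then 4 * (r i)\<^sup>2 else 0)))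
        = (\<Sum>i\<in>J. \<Sum>j\<in>J. (2 * (\<beta> i * (r i)\<^sup>2)) * \<beta> j + (2 * \<beta> i) * (\<beta> j * (r j)\<^sup>2))
          - (\<Sum>i\<in>J. \<Sum>j\<in>J. \<beta> i * \<beta> j * (r i - r j)\<^sup>2)
          - (\<Sum>i\<in>J. \<Sum>j\<in>J. if i = j then 4 * (\<beta> i * r i)\<^sup>2 else 0)"
      by (simp add: sum_subtractf[symmetric] power2_eq_square algebra_simps if_distrib cong: if_cong)
    also have "\<dots> = (\<Sum>i\<in>J. 2 * (\<beta> i * (r i)\<^sup>2)) * B + (\<Sum>i\<in>J. 2 * \<beta> i) * (\<Sum>j\<in>J. \<beta> j * (r j)\<^sup>2)
          - (2 * B - 2 * P\<^sup>2) - 4 * T"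
      using \<open>finite J\<close> weighted_spread unfolding B_def T_def sum_product
      by (simp add: sum.distrib sum_distrib_left)
    also have "\<dots> = 4 * B - (2 * B - 2 * P\<^sup>2) - 4 * T"
      using normalized by (simp add: sum_distrib_left[symmetric] B_def)
    finally show ?thesis by simp
  qed
  finally have spread_bound: "l\<^sup>2 * B \<le> B + P\<^sup>2 - 2 * T" using spread_eq by simp
  have "P\<^sup>2 \<le> k * T"
    using Cauchy_Schwarz_ineq_sum[of "\<lambda>_. 1" "\<lambda>j. \<beta> j * r j" J] by (simp add: P_def T_def k_def)
  moreover have "(k - 2) * P\<^sup>2 \<le> (k - 2) * B"
  proof (cases "k \<ge> 2")
    case True
    have "0 \<le> (\<Sum>i\<in>J. \<Sum>j\<in>J. \<beta> i * \<beta> j * (r i - r j)\<^sup>2)"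
      using \<beta>_nonneg by (intro sum_nonneg) auto
    then show ?thesis using True weighted_spread by (intro mult_left_mono) auto
  next
    case False
    then have "card J = 1" using k_ge_1 unfolding k_def by linarith
    then obtain j where "J = {j}" by (rule card_1_singletonE)
    then show ?thesis using weighted_spread by simp
  qed
  ultimately have "(k * l\<^sup>2) * B \<le> (2 * k - 2) * B"
    using spread_bound k_ge_1 mult_left_mono[OF spread_bound, of k] by (simp add: algebra_simps)
  from mult_right_le_imp_le[OF this B_pos] show ?thesis unfolding k_def .
qed

lemma continuous_on_Max:
  fixes f :: "'i \<Rightarrow> 'a::topological_space \<Rightarrow> 'b::linorder_topology"
  assumes "finite A" "A \<noteq> {}" "\<And>i. i \<in> A \<Longrightarrow> continuous_on S (f i)"
  shows "continuous_on S (\<lambda>x. Max ((\<lambda>i. f i x) ` A))"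
  using assms
proof (induction A rule: finite_ne_induct)
  case (insert a A)
  then show ?case by (simp add: continuous_on_max)
qed simp

lemma continuous_attains_global_inf:
  fixes f :: "'a::heine_borel \<Rightarrow> real"
  assumes "continuous_on UNIV f" and "\<And>y. y \<notin> cball a R \<Longrightarrow> f a \<le> f y"
  obtains x where "\<And>y. f x \<le> f y"
proof (cases "R < 0")
  case True
  then show ?thesis using assms(2) by (intro that[of a]) simp
next
  case False
  then obtain x where "x \<in> cball a R" and x_min: "\<And>y. y \<in> cball a R \<Longrightarrow> f x \<le> f y"
    using continuous_attains_inf[OF compact_cball _ continuous_on_subset[OF assms(1)], of a R] by auto
  moreover have "f x \<le> f a" using False x_min by simp
  ultimately show ?thesis using assms(2) that by force
qed

lemma exists_minimal_enlargement:
  fixes c :: "'b \<Rightarrow> 'a::heine_borel"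
  assumes "finite A" "A \<noteq> {}" "\<And>i. i \<in> A \<Longrightarrow> r i > 0"
  obtains x0 l where "\<And>i. i \<in> A \<Longrightarrow> dist x0 (c i) \<le> l * r i"
    and "\<nexists>x. \<forall>i\<in>A. dist x (c i) < l * r i"
proof -
  define F where "F x = Max ((\<lambda>i. dist x (c i) / r i) ` A)" for x
  have F_ge: "dist x (c i) / r i \<le> F x" if "i \<in> A" for x i
    unfolding F_def using assms that by (intro Max_ge) auto
  have F_less: "F x < t" if "\<And>i. i \<in> A \<Longrightarrow> dist x (c i) / r i < t" for x t
    unfolding F_def using assms that by (subst Max_less_iff) auto
  obtain a where "a \<in> A" using assms(2) by blast
  have F_cont: "continuous_on UNIV F"
    unfolding F_def using assms(1,2) by (intro continuous_on_Max continuous_intros) (force dest: assms(3))+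
  have F_coercive: "F (c a) \<le> F y" if "y \<notin> cball (c a) (r a * F (c a))" for y
  proof -
    have "F (c a) < dist y (c a) / r a"
      using that assms(3)[OF \<open>a \<in> A\<close>] by (simp add: dist_commute field_simps)
    then show ?thesis using F_ge[OF \<open>a \<in> A\<close>, of y] by linarith
  qed
  obtain x0 where x0_min: "\<And>y. F x0 \<le> F y"
    using continuous_attains_global_inf[OF F_cont F_coercive] by blast
  show ?thesis
  proof
    show "dist x0 (c i) \<le> F x0 * r i" if "i \<in> A" for i
      using F_ge[OF that, of x0] assms(3)[OF that] by (simp add: field_simps)
    show "\<nexists>x. \<forall>i\<in>A. dist x (c i) < F x0 * r i"
    proof
      assume "\<exists>x. \<forall>i\<in>A. dist x (c i) < F x0 * r i"
      then obtain x where "\<forall>i\<in>A. dist x (c i) < F x0 * r i" by blast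
      then have "F x < F x0" using assms(3) by (intro F_less) (simp add: field_simps)
      then show False using x0_min[of x] by simp
    qed
  qed
qed

lemma exists_strictly_closer_point:
  fixes c :: "'b \<Rightarrow> 'a::real_inner"
  assumes "finite A" and dist_le: "\<And>i. i \<in> A \<Longrightarrow> dist x0 (c i) \<le> \<rho> i"
    and descent: "\<And>i. i \<in> A \<Longrightarrow> dist x0 (c i) = \<rho> i \<Longrightarrow> a \<bullet> (x0 - c i) > 0"
  shows "\<exists>x. \<forall>i\<in>A. dist x (c i) < \<rho> i"
proof -
  have "\<forall>\<^sub>F t in at_right 0. dist (x0 - t *\<^sub>R a) (c i) < \<rho> i" if "i \<in> A" for i
  proof (cases "dist x0 (c i) = \<rho> i")
    case True
    define v where "v = x0 - c i"
    have av: "a \<bullet> v > 0" using descent[OF that True] unfolding v_def .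
    then have "a \<noteq> 0" by auto
    have "dist (x0 - t *\<^sub>R a) (c i) < \<rho> i" if t: "0 < t" "t < 2 * (a \<bullet> v) / (norm a)\<^sup>2" for t
    proof -
      have "t * (norm a)\<^sup>2 < 2 * (a \<bullet> v)" using t \<open>a \<noteq> 0\<close> by (simp add: field_simps)
      then have "t * (t * (norm a)\<^sup>2) < t * (2 * (a \<bullet> v))" using t by simp
      moreover have "(dist (x0 - t *\<^sub>R a) (c i))\<^sup>2 = (norm v)\<^sup>2 - 2 * t * (a \<bullet> v) + t\<^sup>2 * (norm a)\<^sup>2"
        unfolding dist_norm v_def power2_norm_eq_inner
        by (simp add: inner_commute power2_eq_square algebra_simps)
      ultimately have "(dist (x0 - t *\<^sub>R a) (c i))\<^sup>2 < (\<rho> i)\<^sup>2"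
        using True unfolding v_def dist_norm by (simp add: power2_eq_square algebra_simps)
      moreover have "0 \<le> \<rho> i" using True zero_le_dist by metis
      ultimately show ?thesis by (rule power2_less_imp_less)
    qed
    moreover have "2 * (a \<bullet> v) / (norm a)\<^sup>2 > 0" using av \<open>a \<noteq> 0\<close> by simp
    ultimately show ?thesis by (subst eventually_at_right) auto
  next
    case False
    have "((\<lambda>t. dist (x0 - t *\<^sub>R a) (c i)) \<longlongrightarrow> dist (x0 - 0 *\<^sub>R a) (c i)) (at_right 0)"
      by (intro tendsto_intros)
    moreover have "dist (x0 - 0 *\<^sub>R a) (c i) < \<rho> i" using False dist_le[OF that] by simp
    ultimately show ?thesis by (rule order_tendstoD)
  qed
  then have "\<forall>\<^sub>F t in at_right 0. \<forall>i\<in>A. dist (x0 - t *\<^sub>R a) (c i) < \<rho> i"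
    using \<open>finite A\<close> by (intro eventually_ball_finite) auto
  then show ?thesis using eventually_happens'[OF trivial_limit_at_right_real] by blast
qed

lemma zero_in_convex_hull_active_directions:
  fixes c :: "'b \<Rightarrow> 'a::euclidean_space"
  assumes "finite A" and "\<And>i. i \<in> A \<Longrightarrow> dist x0 (c i) \<le> \<rho> i"
    and "\<nexists>x. \<forall>i\<in>A. dist x (c i) < \<rho> i" and "\<And>i. i \<in> A \<Longrightarrow> s i > 0"
  shows "0 \<in> convex hull ((\<lambda>i. s i *\<^sub>R (x0 - c i)) ` {i\<in>A. dist x0 (c i) = \<rho> i})"
proof (rule ccontr)
  let ?H = "convex hull ((\<lambda>i. s i *\<^sub>R (x0 - c i)) ` {i\<in>A. dist x0 (c i) = \<rho> i})"
  assume "0 \<notin> ?H"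
  moreover have "closed ?H"
    using \<open>finite A\<close> by (intro compact_imp_closed finite_imp_compact_convex_hull) auto
  ultimately obtain a b where "0 < b" and separates: "\<And>z. z \<in> ?H \<Longrightarrow> a \<bullet> z > b"
    using separating_hyperplane_closed_0[OF convex_convex_hull] by blast
  have "a \<bullet> (x0 - c i) > 0" if "i \<in> A" "dist x0 (c i) = \<rho> i" for i
  proof -
    have "s i *\<^sub>R (x0 - c i) \<in> ?H" using that by (intro hull_inc) auto
    then have "s i * (a \<bullet> (x0 - c i)) > b" using separates by fastforce
    then have "0 < s i * (a \<bullet> (x0 - c i))" using \<open>0 < b\<close> by linarith
    then show ?thesis using assms(4)[OF \<open>i \<in> A\<close>] zero_less_mult_pos by blast
  qed
  then show False using exists_strictly_closer_point[OF \<open>finite A\<close>] assms(2,3) by blast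
qed

lemma convex_hull_image_caratheodory:
  fixes g :: "'b \<Rightarrow> 'a::euclidean_space"
  assumes "y \<in> convex hull (g ` I)"
  obtains J w where "J \<subseteq> I" "finite J" "card J \<le> DIM('a) + 1" "\<And>j. j \<in> J \<Longrightarrow> w j \<ge> 0"
    "sum w J = 1" "(\<Sum>j\<in>J. w j *\<^sub>R g j) = y"
proof -
  obtain S u where "finite S" "S \<subseteq> g ` I" "card S \<le> DIM('a) + 1" "\<forall>x\<in>S. 0 \<le> u x"
    "sum u S = 1" "(\<Sum>v\<in>S. u v *\<^sub>R v) = y"
    using assms unfolding convex_hull_caratheodory by blast
  moreover obtain J where "J \<subseteq> I" "inj_on g J" "S = g ` J"
    using \<open>S \<subseteq> g ` I\<close> by (auto simp: subset_image_inj)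
  ultimately show ?thesis
    using that[of J "u \<circ> g"] by (simp add: sum.reindex card_image finite_image_iff)
qed

lemma minimal_enlargement_sq_le:
  fixes c :: "'b \<Rightarrow> 'a::euclidean_space"
  assumes "finite A" and r_pos: "\<And>i. i \<in> A \<Longrightarrow> r i > 0"
    and intersect: "\<And>i j. i \<in> A \<Longrightarrow> j \<in> A \<Longrightarrow> cball (c i) (r i) \<inter> cball (c j) (r j) \<noteq> {}"
    and covers: "\<And>i. i \<in> A \<Longrightarrow> dist x0 (c i) \<le> l * r i"
    and minimal: "\<nexists>x. \<forall>i\<in>A. dist x (c i) < l * r i"
  shows "l\<^sup>2 \<le> 2 * real DIM('a) / (real DIM('a) + 1)"
proof -
  define I where "I = {i\<in>A. dist x0 (c i) = l * r i}"
  have "0 \<in> convex hull ((\<lambda>i. (1 / (r i)\<^sup>2) *\<^sub>R (x0 - c i)) ` I)"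
    unfolding I_def using assms(1,4,5) by (intro zero_in_convex_hull_active_directions) (auto dest: r_pos)
  then obtain J w where "J \<subseteq> I" "finite J" and card_J: "card J \<le> DIM('a) + 1"
    and w_nonneg: "\<And>j. j \<in> J \<Longrightarrow> w j \<ge> 0" and "sum w J = 1"
    and w_balanced: "(\<Sum>j\<in>J. w j *\<^sub>R ((1 / (r j)\<^sup>2) *\<^sub>R (x0 - c j))) = 0"
    by (rule convex_hull_image_caratheodory) blast
  have J_A: "j \<in> A" if "j \<in> J" for j using \<open>J \<subseteq> I\<close> that unfolding I_def by auto
  \<comment> \<open>The scaling by \<open>1 / r\<^sub>i\<^sup>2\<close> is what turns the Caratheodory weights into weights normalised by \<open>\<Sum> \<beta>\<^sub>j r\<^sub>j\<^sup>2 = 1\<close>.\<close>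
  have "real (card J) * l\<^sup>2 \<le> 2 * real (card J) - 2"
  proof (rule jung_card_bound[of J "\<lambda>j. w j / (r j)\<^sup>2" r c x0])
    show "(\<Sum>j\<in>J. w j / (r j)\<^sup>2 * (r j)\<^sup>2) = 1"
      using \<open>sum w J = 1\<close> r_pos[OF J_A] by (simp add: less_imp_neq[symmetric] cong: sum.cong)
    have "(\<Sum>j\<in>J. (w j / (r j)\<^sup>2) *\<^sub>R (c j - x0)) = - (\<Sum>j\<in>J. w j *\<^sub>R ((1 / (r j)\<^sup>2) *\<^sub>R (x0 - c j)))"
      by (simp add: sum_negf[symmetric] algebra_simps)
    then show "(\<Sum>j\<in>J. (w j / (r j)\<^sup>2) *\<^sub>R (c j - x0)) = 0" using w_balanced by simp
    show "dist (c j) x0 = l * r j" if "j \<in> J" for j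
      using \<open>J \<subseteq> I\<close> that unfolding I_def by (auto simp: dist_commute)
    show "dist (c i) (c j) \<le> r i + r j" if "i \<in> J" "j \<in> J" for i j
    proof -
      obtain y where "y \<in> cball (c i) (r i)" "y \<in> cball (c j) (r j)"
        using intersect[OF J_A[OF \<open>i \<in> J\<close>] J_A[OF \<open>j \<in> J\<close>]] by blast
      then show ?thesis using dist_triangle[of "c i" "c j" y] by (simp add: dist_commute)
    qed
  qed (use \<open>finite J\<close> w_nonneg r_pos in auto)
  moreover have "J \<noteq> {}" using \<open>sum w J = 1\<close> by auto
  ultimately have "l\<^sup>2 \<le> 2 - 2 / real (card J)"
    using \<open>finite J\<close> by (simp add: field_simps card_gt_0_iff)
  also have "\<dots> \<le> 2 - 2 / (real DIM('a) + 1)"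
    using card_J \<open>J \<noteq> {}\<close> \<open>finite J\<close> by (simp add: frac_le card_gt_0_iff)
  also have "\<dots> = 2 * real DIM('a) / (real DIM('a) + 1)"
    by (simp add: field_simps)
  finally show ?thesis .
qed

theorem lemma2p2:
  fixes c :: "nat \<Rightarrow> 'a::euclidean_space" and r :: "nat \<Rightarrow> real" and m :: nat
  assumes "\<And>i. i < m \<Longrightarrow> r i > 0"
    and "\<And>i j. i < m \<Longrightarrow> j < m \<Longrightarrow> cball (c i) (r i) \<inter> cball (c j) (r j) \<noteq> {}"
  shows "(\<Inter>i\<in>{..<m}. cball (c i) (sqrt (2 * real DIM('a) / (real DIM('a) + 1)) * r i)) \<noteq> {}"
proof (cases "m = 0")
  case False
  obtain x0 l where covers: "\<And>i. i \<in> {..<m} \<Longrightarrow> dist x0 (c i) \<le> l * r i"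
    and minimal: "\<nexists>x. \<forall>i\<in>{..<m}. dist x (c i) < l * r i"
    by (rule exists_minimal_enlargement[where A="{..<m}" and r=r and c=c]) (use False assms(1) in auto)
  have "l \<le> sqrt (2 * real DIM('a) / (real DIM('a) + 1))"
    using minimal_enlargement_sq_le[where A="{..<m}" and r=r and c=c] assms covers minimal
    by (intro real_le_rsqrt) auto
  then have "dist x0 (c i) \<le> sqrt (2 * real DIM('a) / (real DIM('a) + 1)) * r i" if "i < m" for i
    using covers[of i] assms(1)[OF that] that by (meson less_imp_le mult_right_mono order_trans lessThan_iff)
  then have "x0 \<in> cball (c i) (sqrt (2 * real DIM('a) / (real DIM('a) + 1)) * r i)" if "i < m" for i
    using that by (simp add: dist_commute)
  then show ?thesis by blast
qed simp

end
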